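(* Let $\mathcal G_1\xleftarrow{P_1}\mathcal H\xrightarrow{P_2}\mathcal G_2$ be a fibrant span of essentially finite groupoids, $\rho_i:\mathcal G_i\to\mathrm{Vect}_{\mathbb C}$ functors, and $\sigma:\rho_1P_1\Rightarrow\rho_2P_2$ a natural transformation. For $G_1\in\mathrm{Ob}\,\mathcal G_1$, $G_2\in\mathrm{Ob}\,\mathcal G_2$ write $\{G_1|\mathcal H|G_2\}=\mathrm{Fib}(\langle P_1,P_2\rangle,(G_1,G_2))$ and let $\mathcal R(\mathcal H,G_1,G_2)$ be a set of representatives of its path-components (this set is finite and all automorphism groups in the fibre are finite). Then the linear map $$S^{G_1,G_2}_\sigma=\frac{1}{|\mathrm{Aut}_{\mathcal G_2}(G_2)|}\sum_{H\in\mathcal R(\mathcal H,G_1,G_2)}\frac{1}{|\mathrm{Aut}_{\{G_1|\mathcal H|G_2\}}(H)|}\,\sigma_H:\rho_1(G_1)\to\rho_2(G_2)$$ is independent of the choice of $\mathcal R(\mathcal H,G_1,G_2)$ and takes values in the invariant subspace $\rho_2(G_2)^{\mathrm{Aut}_{\mathcal G_2}(G_2)}=\{x\in\rho_2(G_2)\mid \rho_2(g)x=x\ \forall g\in\mathrm{Aut}_{\mathcal G_2}(G_2)\}$.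
   Context: A groupoid is essentially finite if it is equivalent to a groupoid with finitely many objects and morphisms. A functor $F:\mathcal E\to\mathcal B$ of groupoids is a fibration if for every object $E$ and morphism $h:B'\to F(E)$ there is $g:E'\to E$ with $F(g)=h$; a span $\mathcal G_1\xleftarrow{P_1}\mathcal H\xrightarrow{P_2}\mathcal G_2$ is fibrant if $\langle P_1,P_2\rangle:\mathcal H\to\mathcal G_1\times\mathcal G_2$ is a fibration. For a functor $F:\mathcal A\to\mathcal B$ and $B\in\mathrm{Ob}\,\mathcal B$, the fibre $\mathrm{Fib}(F,B)$ has objects $A$ with $F(A)=B$ and morphisms the $f$ in $\mathcal A$ with $F(f)=1_B$. $\mathrm{Aut}_{\mathcal G}(G)=\hom_{\mathcal G}(G,G)$. *)

theory Defs
  imports Complex_Main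
begin

text \<open>A (small) groupoid: objects, hom-sets, composition (cmp g f = g after f), identities.\<close>
record ('o,'m) gpd =
  Obj :: "'o set"
  Hom :: "'o \<Rightarrow> 'o \<Rightarrow> 'm set"
  cmp :: "'m \<Rightarrow> 'm \<Rightarrow> 'm"
  idm :: "'o \<Rightarrow> 'm"

definition groupoid :: "('o,'m) gpd \<Rightarrow> bool" where
  "groupoid G \<longleftrightarrow>
     (\<forall>A B. Hom G A B \<noteq> {} \<longrightarrow> A \<in> Obj G \<and> B \<in> Obj G) \<and>
     (\<forall>A B A' B' f. f \<in> Hom G A B \<and> f \<in> Hom G A' B' \<longrightarrow> A = A' \<and> B = B') \<and>
     (\<forall>A\<in>Obj G. idm G A \<in> Hom G A A) \<and>
     (\<forall>A B C f g. f \<in> Hom G A B \<longrightarrow> g \<in> Hom G B C \<longrightarrow> cmp G g f \<in> Hom G A C) \<and>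
     (\<forall>A B C D f g h. f \<in> Hom G A B \<longrightarrow> g \<in> Hom G B C \<longrightarrow> h \<in> Hom G C D \<longrightarrow>
         cmp G h (cmp G g f) = cmp G (cmp G h g) f) \<and>
     (\<forall>A B f. f \<in> Hom G A B \<longrightarrow> cmp G f (idm G A) = f \<and> cmp G (idm G B) f = f) \<and>
     (\<forall>A B f. f \<in> Hom G A B \<longrightarrow> (\<exists>g\<in>Hom G B A. cmp G g f = idm G A \<and> cmp G f g = idm G B))"

definition Aut :: "('o,'m) gpd \<Rightarrow> 'o \<Rightarrow> 'm set" where
  "Aut G X = Hom G X X"

definition gfunctor :: "('o,'m) gpd \<Rightarrow> ('p,'n) gpd \<Rightarrow> ('o \<Rightarrow> 'p) \<Rightarrow> ('m \<Rightarrow> 'n) \<Rightarrow> bool" where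
  "gfunctor G K Fo Fm \<longleftrightarrow>
     (\<forall>A\<in>Obj G. Fo A \<in> Obj K) \<and>
     (\<forall>A B f. f \<in> Hom G A B \<longrightarrow> Fm f \<in> Hom K (Fo A) (Fo B)) \<and>
     (\<forall>A B C f g. f \<in> Hom G A B \<longrightarrow> g \<in> Hom G B C \<longrightarrow> Fm (cmp G g f) = cmp K (Fm g) (Fm f)) \<and>
     (\<forall>A\<in>Obj G. Fm (idm G A) = idm K (Fo A))"

text \<open>Natural transformations between functors (Fo,Fm) and (Fo',Fm') from G to K.
  Between groupoids these are automatically natural isomorphisms.\<close>
definition nat_trans :: "('o,'m) gpd \<Rightarrow> ('p,'n) gpd \<Rightarrow> ('o \<Rightarrow> 'p) \<Rightarrow> ('m \<Rightarrow> 'n)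
    \<Rightarrow> ('o \<Rightarrow> 'p) \<Rightarrow> ('m \<Rightarrow> 'n) \<Rightarrow> ('o \<Rightarrow> 'n) \<Rightarrow> bool" where
  "nat_trans G K Fo Fm Fo' Fm' \<eta> \<longleftrightarrow>
     (\<forall>A\<in>Obj G. \<eta> A \<in> Hom K (Fo A) (Fo' A)) \<and>
     (\<forall>A B f. f \<in> Hom G A B \<longrightarrow> cmp K (Fm' f) (\<eta> A) = cmp K (\<eta> B) (Fm f))"

definition equivalent_gpd :: "('o,'m) gpd \<Rightarrow> ('p,'n) gpd \<Rightarrow> bool" where
  "equivalent_gpd G K \<longleftrightarrow>
     (\<exists>Fo Fm Go Gm \<eta> \<epsilon>. gfunctor G K Fo Fm \<and> gfunctor K G Go Gm \<and>
        nat_trans G G id id (Go \<circ> Fo) (Gm \<circ> Fm) \<eta> \<and>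
        nat_trans K K id id (Fo \<circ> Go) (Fm \<circ> Gm) \<epsilon>)"

definition finite_gpd :: "('o,'m) gpd \<Rightarrow> bool" where
  "finite_gpd G \<longleftrightarrow> finite (Obj G) \<and> finite (\<Union>A\<in>Obj G. \<Union>B\<in>Obj G. Hom G A B)"

text \<open>Every finite groupoid is isomorphic to one whose objects and morphisms are natural numbers,
  so it suffices to quantify over groupoids of type (nat,nat) gpd.\<close>
definition ess_finite :: "('o,'m) gpd \<Rightarrow> bool" where
  "ess_finite G \<longleftrightarrow> (\<exists>K :: (nat,nat) gpd. groupoid K \<and> finite_gpd K \<and> equivalent_gpd G K)"

definition prod_gpd :: "('o,'m) gpd \<Rightarrow> ('p,'n) gpd \<Rightarrow> ('o \<times> 'p, 'm \<times> 'n) gpd" where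
  "prod_gpd G K = \<lparr> Obj = Obj G \<times> Obj K,
      Hom = (\<lambda>(A,A') (B,B'). Hom G A B \<times> Hom K A' B'),
      cmp = (\<lambda>(g,g') (f,f'). (cmp G g f, cmp K g' f')),
      idm = (\<lambda>(A,A'). (idm G A, idm K A')) \<rparr>"

definition fibration :: "('o,'m) gpd \<Rightarrow> ('p,'n) gpd \<Rightarrow> ('o \<Rightarrow> 'p) \<Rightarrow> ('m \<Rightarrow> 'n) \<Rightarrow> bool" where
  "fibration E B Fo Fm \<longleftrightarrow>
     (\<forall>X\<in>Obj E. \<forall>B'. \<forall>h \<in> Hom B B' (Fo X). \<exists>X' g. g \<in> Hom E X' X \<and> Fm g = h)"

definition fibrant_span :: "('o1,'m1) gpd \<Rightarrow> ('h,'hm) gpd \<Rightarrow> ('o2,'m2) gpd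
    \<Rightarrow> ('h \<Rightarrow> 'o1) \<Rightarrow> ('hm \<Rightarrow> 'm1) \<Rightarrow> ('h \<Rightarrow> 'o2) \<Rightarrow> ('hm \<Rightarrow> 'm2) \<Rightarrow> bool" where
  "fibrant_span G1 H G2 P1o P1m P2o P2m \<longleftrightarrow>
     fibration H (prod_gpd G1 G2) (\<lambda>X. (P1o X, P2o X)) (\<lambda>h. (P1m h, P2m h))"

definition Fib :: "('o,'m) gpd \<Rightarrow> ('p,'n) gpd \<Rightarrow> ('o \<Rightarrow> 'p) \<Rightarrow> ('m \<Rightarrow> 'n) \<Rightarrow> 'p \<Rightarrow> ('o,'m) gpd" where
  "Fib A B Fo Fm b = \<lparr> Obj = {X\<in>Obj A. Fo X = b},
      Hom = (\<lambda>X Y. {f \<in> Hom A X Y. Fo X = b \<and> Fo Y = b \<and> Fm f = idm B b}),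
      cmp = cmp A, idm = idm A \<rparr>"

definition span_fib :: "('o1,'m1) gpd \<Rightarrow> ('h,'hm) gpd \<Rightarrow> ('o2,'m2) gpd
    \<Rightarrow> ('h \<Rightarrow> 'o1) \<Rightarrow> ('hm \<Rightarrow> 'm1) \<Rightarrow> ('h \<Rightarrow> 'o2) \<Rightarrow> ('hm \<Rightarrow> 'm2) \<Rightarrow> 'o1 \<Rightarrow> 'o2 \<Rightarrow> ('h,'hm) gpd" where
  "span_fib G1 H G2 P1o P1m P2o P2m A B =
     Fib H (prod_gpd G1 G2) (\<lambda>X. (P1o X, P2o X)) (\<lambda>h. (P1m h, P2m h)) (A, B)"

definition component_reps :: "('o,'m) gpd \<Rightarrow> 'o set \<Rightarrow> bool" where
  "component_reps G R \<longleftrightarrow> R \<subseteq> Obj G \<and> (\<forall>X\<in>Obj G. \<exists>!Y. Y \<in> R \<and> Hom G X Y \<noteq> {})"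

definition lin_on :: "(complex \<Rightarrow> 'v \<Rightarrow> 'v) \<Rightarrow> (complex \<Rightarrow> 'w \<Rightarrow> 'w) \<Rightarrow> 'v set \<Rightarrow> 'w set
    \<Rightarrow> ('v::ab_group_add \<Rightarrow> 'w::ab_group_add) \<Rightarrow> bool" where
  "lin_on s1 s2 U W f \<longleftrightarrow> (\<forall>x\<in>U. f x \<in> W) \<and> (\<forall>x\<in>U. \<forall>y\<in>U. f (x + y) = f x + f y) \<and>
     (\<forall>c. \<forall>x\<in>U. f (s1 c x) = s2 c (f x))"

text \<open>A functor rho : G \<rightarrow> Vect_C: each object A goes to the complex vector space V A
  (a subspace of the complex vector space ('v, +, s)), each morphism f to the linear map act f.\<close>
definition vect_rep :: "('o,'m) gpd \<Rightarrow> (complex \<Rightarrow> 'v \<Rightarrow> 'v) \<Rightarrow> ('o \<Rightarrow> 'v set) \<Rightarrow> ('m \<Rightarrow> 'v \<Rightarrow> 'v::ab_group_add) \<Rightarrow> bool" where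
  "vect_rep G s V act \<longleftrightarrow> module s \<and>
     (\<forall>A\<in>Obj G. module.subspace s (V A)) \<and>
     (\<forall>A B f. f \<in> Hom G A B \<longrightarrow> lin_on s s (V A) (V B) (act f)) \<and>
     (\<forall>A B C f g. f \<in> Hom G A B \<longrightarrow> g \<in> Hom G B C \<longrightarrow> (\<forall>x\<in>V A. act (cmp G g f) x = act g (act f x))) \<and>
     (\<forall>A\<in>Obj G. \<forall>x\<in>V A. act (idm G A) x = x)"

definition vect_nat_trans :: "('h,'hm) gpd \<Rightarrow> (complex \<Rightarrow> 'v \<Rightarrow> 'v) \<Rightarrow> (complex \<Rightarrow> 'w \<Rightarrow> 'w)
    \<Rightarrow> ('h \<Rightarrow> 'v set) \<Rightarrow> ('hm \<Rightarrow> 'v \<Rightarrow> 'v) \<Rightarrow> ('h \<Rightarrow> 'w set) \<Rightarrow> ('hm \<Rightarrow> 'w \<Rightarrow> 'w)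
    \<Rightarrow> ('h \<Rightarrow> 'v::ab_group_add \<Rightarrow> 'w::ab_group_add) \<Rightarrow> bool" where
  "vect_nat_trans H s1 s2 V1 act1 V2 act2 \<sigma> \<longleftrightarrow>
     (\<forall>X\<in>Obj H. lin_on s1 s2 (V1 X) (V2 X) (\<sigma> X)) \<and>
     (\<forall>X Y h. h \<in> Hom H X Y \<longrightarrow> (\<forall>x\<in>V1 X. \<sigma> Y (act1 h x) = act2 h (\<sigma> X x)))"

definition S_map :: "('o1,'m1) gpd \<Rightarrow> ('h,'hm) gpd \<Rightarrow> ('o2,'m2) gpd
    \<Rightarrow> ('h \<Rightarrow> 'o1) \<Rightarrow> ('hm \<Rightarrow> 'm1) \<Rightarrow> ('h \<Rightarrow> 'o2) \<Rightarrow> ('hm \<Rightarrow> 'm2)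
    \<Rightarrow> (complex \<Rightarrow> 'w \<Rightarrow> 'w) \<Rightarrow> ('h \<Rightarrow> 'v \<Rightarrow> 'w::ab_group_add) \<Rightarrow> 'o1 \<Rightarrow> 'o2 \<Rightarrow> 'h set \<Rightarrow> 'v \<Rightarrow> 'w" where
  "S_map G1 H G2 P1o P1m P2o P2m s2 \<sigma> A B R x =
     s2 (1 / of_nat (card (Aut G2 B)))
       (\<Sum>Y\<in>R. s2 (1 / of_nat (card (Aut (span_fib G1 H G2 P1o P1m P2o P2m A B) Y))) (\<sigma> Y x))"

end

theory Submission
  imports Defs
begin

text \<open>Conjugation by a morphism of the fibre \<open>{G1|H|G2}\<close> identifies automorphism groups, and \<open>\<sigma>\<close>
  is natural, so every summand of \<open>S\<close> depends only on the path-component of its index; the sums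
  over two sets of representatives therefore agree. For \<open>g \<in> Aut(G2)\<close>, the fibration property
  lifts \<open>(1, g)\<close> to every representative; the sources of these lifts are again a set of
  representatives, and by naturality \<open>g\<close> maps the sum over them to the original sum.
  Finiteness comes from a finite skeleton of \<open>H\<close>: a representative is determined by the skeleton
  object it is connected to together with the image of a connecting morphism in \<open>G1 \<times> G2\<close>,
  which ranges over finite hom-sets.\<close>

section \<open>Groupoids\<close>

lemma groupoid_Hom_Obj: "groupoid G \<Longrightarrow> f \<in> Hom G X Y \<Longrightarrow> X \<in> Obj G \<and> Y \<in> Obj G"
  unfolding groupoid_def by (metis empty_iff)

lemma groupoid_Hom_unique: "groupoid G \<Longrightarrow> f \<in> Hom G X Y \<Longrightarrow> f \<in> Hom G X' Y' \<Longrightarrow> X = X' \<and> Y = Y'"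
  unfolding groupoid_def by (elim conjE) (metis (no_types))

lemma groupoid_idm_Hom: "groupoid G \<Longrightarrow> X \<in> Obj G \<Longrightarrow> idm G X \<in> Hom G X X"
  unfolding groupoid_def by blast

lemma groupoid_cmp_Hom: "groupoid G \<Longrightarrow> f \<in> Hom G X Y \<Longrightarrow> g \<in> Hom G Y Z \<Longrightarrow> cmp G g f \<in> Hom G X Z"
  unfolding groupoid_def by blast

lemma groupoid_cmp_assoc:
  "groupoid G \<Longrightarrow> f \<in> Hom G X Y \<Longrightarrow> g \<in> Hom G Y Z \<Longrightarrow> h \<in> Hom G Z W \<Longrightarrow>
   cmp G h (cmp G g f) = cmp G (cmp G h g) f"
  unfolding groupoid_def by blast

lemma groupoid_idm_left: "groupoid G \<Longrightarrow> f \<in> Hom G X Y \<Longrightarrow> cmp G (idm G Y) f = f"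
  unfolding groupoid_def by blast

lemma groupoid_idm_right: "groupoid G \<Longrightarrow> f \<in> Hom G X Y \<Longrightarrow> cmp G f (idm G X) = f"
  unfolding groupoid_def by blast

lemma groupoid_inverse_ex:
  "groupoid G \<Longrightarrow> f \<in> Hom G X Y \<Longrightarrow> \<exists>g\<in>Hom G Y X. cmp G g f = idm G X \<and> cmp G f g = idm G Y"
  unfolding groupoid_def by blast

lemma groupoidI:
  assumes "\<And>f X Y. f \<in> Hom G X Y \<Longrightarrow> X \<in> Obj G \<and> Y \<in> Obj G"
    and "\<And>f X Y X' Y'. f \<in> Hom G X Y \<Longrightarrow> f \<in> Hom G X' Y' \<Longrightarrow> X = X' \<and> Y = Y'"
    and "\<And>X. X \<in> Obj G \<Longrightarrow> idm G X \<in> Hom G X X"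
    and "\<And>f g X Y Z. f \<in> Hom G X Y \<Longrightarrow> g \<in> Hom G Y Z \<Longrightarrow> cmp G g f \<in> Hom G X Z"
    and "\<And>f g h X Y Z W. f \<in> Hom G X Y \<Longrightarrow> g \<in> Hom G Y Z \<Longrightarrow> h \<in> Hom G Z W \<Longrightarrow>
      cmp G h (cmp G g f) = cmp G (cmp G h g) f"
    and "\<And>f X Y. f \<in> Hom G X Y \<Longrightarrow> cmp G f (idm G X) = f \<and> cmp G (idm G Y) f = f"
    and "\<And>f X Y. f \<in> Hom G X Y \<Longrightarrow> \<exists>g\<in>Hom G Y X. cmp G g f = idm G X \<and> cmp G f g = idm G Y"
  shows "groupoid G"
  unfolding groupoid_def using assms by (simp; blast)

definition ginv :: "('o,'m) gpd \<Rightarrow> 'm \<Rightarrow> 'm" where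
  "ginv G f = (SOME g. \<exists>X Y. f \<in> Hom G X Y \<and> g \<in> Hom G Y X \<and> cmp G g f = idm G X \<and> cmp G f g = idm G Y)"

lemma ginv:
  assumes G: "groupoid G" and f: "f \<in> Hom G X Y"
  shows "ginv G f \<in> Hom G Y X" "cmp G (ginv G f) f = idm G X" "cmp G f (ginv G f) = idm G Y"
proof -
  have "\<exists>g X Y. f \<in> Hom G X Y \<and> g \<in> Hom G Y X \<and> cmp G g f = idm G X \<and> cmp G f g = idm G Y"
    using groupoid_inverse_ex[OF G f] f by blast
  from someI_ex[OF this] obtain X' Y' where inv: "f \<in> Hom G X' Y'" "ginv G f \<in> Hom G Y' X'"
     "cmp G (ginv G f) f = idm G X'" "cmp G f (ginv G f) = idm G Y'"
    unfolding ginv_def by blast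
  moreover have "X = X'" "Y = Y'" using groupoid_Hom_unique[OF G f inv(1)] by auto
  ultimately show "ginv G f \<in> Hom G Y X" "cmp G (ginv G f) f = idm G X" "cmp G f (ginv G f) = idm G Y"
    by auto
qed

lemma ginv_unique:
  assumes G: "groupoid G" and f: "f \<in> Hom G X Y" and g: "g \<in> Hom G Y X" and gf: "cmp G g f = idm G X"
  shows "g = ginv G f"
proof -
  have "g = cmp G g (cmp G f (ginv G f))" using groupoid_idm_right[OF G g] ginv(3)[OF G f] by simp
  also have "\<dots> = cmp G (cmp G g f) (ginv G f)" using groupoid_cmp_assoc[OF G ginv(1)[OF G f] f g] .
  also have "\<dots> = ginv G f" using gf groupoid_idm_left[OF G ginv(1)[OF G f]] by simp
  finally show ?thesis .
qed

lemma ginv_ginv: "groupoid G \<Longrightarrow> f \<in> Hom G X Y \<Longrightarrow> ginv G (ginv G f) = f"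
  by (metis ginv(1,3) ginv_unique)

lemma ginv_idm: "groupoid G \<Longrightarrow> X \<in> Obj G \<Longrightarrow> ginv G (idm G X) = idm G X"
  by (metis ginv_unique groupoid_idm_Hom groupoid_idm_left)

lemma groupoid_cancel_left:
  assumes G: "groupoid G" and h: "h \<in> Hom G Y Z" and f: "f \<in> Hom G X Y" and f': "f' \<in> Hom G X Y"
    and hf: "cmp G h f = cmp G h f'"
  shows "f = f'"
proof -
  have "f = cmp G (ginv G h) (cmp G h f)"
    using groupoid_cmp_assoc[OF G f h ginv(1)[OF G h]] ginv(2)[OF G h] groupoid_idm_left[OF G f] by simp
  also have "\<dots> = f'"
    using hf groupoid_cmp_assoc[OF G f' h ginv(1)[OF G h]] ginv(2)[OF G h] groupoid_idm_left[OF G f'] by simp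
  finally show ?thesis .
qed

lemma conj_ginv_cancel:
  assumes G: "groupoid G" and k: "k \<in> Hom G Y' Y" and f: "f \<in> Hom G Y' Y'"
  shows "cmp G (ginv G k) (cmp G (cmp G k (cmp G f (ginv G k))) k) = f"
proof -
  let ?k' = "ginv G k"
  have k': "?k' \<in> Hom G Y Y'" using ginv(1)[OF G k] .
  have u: "cmp G f ?k' \<in> Hom G Y Y'" using groupoid_cmp_Hom[OF G k' f] .
  have "cmp G ?k' (cmp G (cmp G k (cmp G f ?k')) k) = cmp G (cmp G (cmp G ?k' k) (cmp G f ?k')) k"
    using groupoid_cmp_assoc[OF G k groupoid_cmp_Hom[OF G u k] k'] groupoid_cmp_assoc[OF G u k k'] by simp
  also have "\<dots> = cmp G f (cmp G ?k' k)"
    using ginv(2)[OF G k] groupoid_idm_left[OF G u] groupoid_cmp_assoc[OF G k k' f] by simp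
  also have "\<dots> = f" using ginv(2)[OF G k] groupoid_idm_right[OF G f] by simp
  finally show ?thesis .
qed

lemma groupoid_Hom_nonempty_sym: "groupoid G \<Longrightarrow> Hom G X Y \<noteq> {} \<Longrightarrow> Hom G Y X \<noteq> {}"
  using ginv(1) by (metis all_not_in_conv)

lemma groupoid_Hom_nonempty_trans:
  "groupoid G \<Longrightarrow> Hom G X Y \<noteq> {} \<Longrightarrow> Hom G Y Z \<noteq> {} \<Longrightarrow> Hom G X Z \<noteq> {}"
  using groupoid_cmp_Hom by (metis all_not_in_conv)

lemma gfunctor_Obj: "gfunctor G K Fo Fm \<Longrightarrow> A \<in> Obj G \<Longrightarrow> Fo A \<in> Obj K"
  unfolding gfunctor_def by blast

lemma gfunctor_Hom: "gfunctor G K Fo Fm \<Longrightarrow> f \<in> Hom G A B \<Longrightarrow> Fm f \<in> Hom K (Fo A) (Fo B)"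
  unfolding gfunctor_def by blast

lemma gfunctor_cmp:
  "gfunctor G K Fo Fm \<Longrightarrow> f \<in> Hom G A B \<Longrightarrow> g \<in> Hom G B C \<Longrightarrow> Fm (cmp G g f) = cmp K (Fm g) (Fm f)"
  unfolding gfunctor_def by blast

lemma gfunctor_idm: "gfunctor G K Fo Fm \<Longrightarrow> A \<in> Obj G \<Longrightarrow> Fm (idm G A) = idm K (Fo A)"
  unfolding gfunctor_def by blast

lemma gfunctor_ginv:
  assumes G: "groupoid G" and K: "groupoid K" and F: "gfunctor G K Fo Fm" and f: "f \<in> Hom G A B"
  shows "Fm (ginv G f) = ginv K (Fm f)"
proof (rule ginv_unique[OF K gfunctor_Hom[OF F f]])
  show "Fm (ginv G f) \<in> Hom K (Fo B) (Fo A)" using gfunctor_Hom[OF F ginv(1)[OF G f]] .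
  show "cmp K (Fm (ginv G f)) (Fm f) = idm K (Fo A)"
    using gfunctor_cmp[OF F f ginv(1)[OF G f]] ginv(2)[OF G f] gfunctor_idm[OF F] groupoid_Hom_Obj[OF G f]
    by simp
qed

section \<open>Essentially finite groupoids\<close>

lemma ess_finiteE:
  assumes "ess_finite G"
  obtains K :: "(nat,nat) gpd" and Fo Fm Go Gm \<eta>
  where "finite_gpd K" "gfunctor G K Fo Fm" "gfunctor K G Go Gm"
    "nat_trans G G id id (Go \<circ> Fo) (Gm \<circ> Fm) \<eta>"
  using assms unfolding ess_finite_def equivalent_gpd_def by blast

lemma ess_finite_finite_Hom:
  assumes G: "groupoid G" and "ess_finite G"
  shows "finite (Hom G X Y)"
proof (cases "X \<in> Obj G \<and> Y \<in> Obj G")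
  case False
  then have "Hom G X Y = {}" using groupoid_Hom_Obj[OF G, of _ X Y] by blast
  then show ?thesis by simp
next
  case True
  obtain K :: "(nat,nat) gpd" and Fo Fm Go Gm \<eta> where K: "finite_gpd K" and F: "gfunctor G K Fo Fm"
    and \<eta>: "nat_trans G G id id (Go \<circ> Fo) (Gm \<circ> Fm) \<eta>"
    using ess_finiteE[OF \<open>ess_finite G\<close>] .
  have \<eta>Y: "\<eta> Y \<in> Hom G Y (Go (Fo Y))" using \<eta> True unfolding nat_trans_def by simp
  \<comment> \<open>\<open>Fm\<close> is faithful, as the isomorphism \<open>\<eta> Y\<close> can be cancelled on the left.\<close>
  have "inj_on Fm (Hom G X Y)"
  proof (rule inj_onI)
    fix f f' assume f: "f \<in> Hom G X Y" and f': "f' \<in> Hom G X Y" and "Fm f = Fm f'"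
    moreover have "cmp G (Gm (Fm h)) (\<eta> X) = cmp G (\<eta> Y) h" if "h \<in> Hom G X Y" for h
      using \<eta> that unfolding nat_trans_def by simp
    ultimately have "cmp G (\<eta> Y) f = cmp G (\<eta> Y) f'" by (metis (no_types))
    then show "f = f'" by (rule groupoid_cancel_left[OF G \<eta>Y f f'])
  qed
  moreover have "Fm f \<in> (\<Union>A\<in>Obj K. \<Union>B\<in>Obj K. Hom K A B)" if "f \<in> Hom G X Y" for f
    using gfunctor_Hom[OF F that] gfunctor_Obj[OF F] True by blast
  then have "Fm ` Hom G X Y \<subseteq> (\<Union>A\<in>Obj K. \<Union>B\<in>Obj K. Hom K A B)" by (rule image_subsetI)
  then have "finite (Fm ` Hom G X Y)" by (rule finite_subset) (use K in \<open>simp add: finite_gpd_def\<close>)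
  ultimately show ?thesis using finite_imageD by blast
qed

lemma ess_finite_finite_component_cover:
  assumes "ess_finite G"
  obtains S where "finite S" "\<forall>X\<in>Obj G. \<exists>Z\<in>S. Hom G X Z \<noteq> {}"
proof -
  obtain K :: "(nat,nat) gpd" and Fo Fm Go Gm \<eta> where K: "finite_gpd K" and F: "gfunctor G K Fo Fm"
    and \<eta>: "nat_trans G G id id (Go \<circ> Fo) (Gm \<circ> Fm) \<eta>"
    using ess_finiteE[OF assms] .
  have "\<forall>X\<in>Obj G. \<exists>Z\<in>Go ` Obj K. Hom G X Z \<noteq> {}"
  proof
    fix X assume X: "X \<in> Obj G"
    then have "\<eta> X \<in> Hom G X (Go (Fo X))" using \<eta> unfolding nat_trans_def by simp
    then show "\<exists>Z\<in>Go ` Obj K. Hom G X Z \<noteq> {}" using gfunctor_Obj[OF F X] by blast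
  qed
  moreover have "finite (Go ` Obj K)" using K unfolding finite_gpd_def by simp
  ultimately show ?thesis using that by blast
qed

section \<open>Products and path components\<close>

lemma prod_gpd_Obj: "X \<in> Obj (prod_gpd G K) \<longleftrightarrow> fst X \<in> Obj G \<and> snd X \<in> Obj K"
  by (cases X) (simp add: prod_gpd_def)

lemma prod_gpd_Hom: "f \<in> Hom (prod_gpd G K) X Y \<longleftrightarrow> fst f \<in> Hom G (fst X) (fst Y) \<and> snd f \<in> Hom K (snd X) (snd Y)"
  by (cases X; cases Y; cases f) (simp add: prod_gpd_def)

lemma prod_gpd_cmp: "cmp (prod_gpd G K) g f = (cmp G (fst g) (fst f), cmp K (snd g) (snd f))"
  by (cases f; cases g) (simp add: prod_gpd_def)

lemma prod_gpd_idm: "idm (prod_gpd G K) X = (idm G (fst X), idm K (snd X))"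
  by (cases X) (simp add: prod_gpd_def)

lemma prod_groupoid:
  assumes G: "groupoid G" and K: "groupoid K"
  shows "groupoid (prod_gpd G K)"
proof -
  let ?P = "prod_gpd G K"
  note prod_simps = prod_gpd_Obj prod_gpd_Hom prod_gpd_cmp prod_gpd_idm
  have "X \<in> Obj ?P \<and> Y \<in> Obj ?P" if "f \<in> Hom ?P X Y" for f X Y
    using that groupoid_Hom_Obj[OF G] groupoid_Hom_Obj[OF K] unfolding prod_simps by blast
  moreover have "X = X' \<and> Y = Y'" if "f \<in> Hom ?P X Y" "f \<in> Hom ?P X' Y'" for f X Y X' Y'
    using that groupoid_Hom_unique[OF G] groupoid_Hom_unique[OF K] unfolding prod_simps prod_eq_iff by blast
  moreover have "idm ?P X \<in> Hom ?P X X" if "X \<in> Obj ?P" for X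
    using that groupoid_idm_Hom[OF G] groupoid_idm_Hom[OF K] by (simp add: prod_simps)
  moreover have "cmp ?P g f \<in> Hom ?P X Z" if "f \<in> Hom ?P X Y" "g \<in> Hom ?P Y Z" for f g X Y Z
    using that groupoid_cmp_Hom[OF G] groupoid_cmp_Hom[OF K] unfolding prod_simps by auto
  moreover have "cmp ?P h (cmp ?P g f) = cmp ?P (cmp ?P h g) f"
    if "f \<in> Hom ?P X Y" "g \<in> Hom ?P Y Z" "h \<in> Hom ?P Z W" for f g h X Y Z W
    using that groupoid_cmp_assoc[OF G] groupoid_cmp_assoc[OF K] unfolding prod_simps by auto
  moreover have "cmp ?P f (idm ?P X) = f \<and> cmp ?P (idm ?P Y) f = f" if "f \<in> Hom ?P X Y" for f X Y
    using that groupoid_idm_left[OF G] groupoid_idm_left[OF K] groupoid_idm_right[OF G] groupoid_idm_right[OF K]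
    unfolding prod_simps by auto
  moreover have "\<exists>g\<in>Hom ?P Y X. cmp ?P g f = idm ?P X \<and> cmp ?P f g = idm ?P Y" if "f \<in> Hom ?P X Y" for f X Y
    using that ginv[OF G] ginv[OF K]
    by (intro bexI[of _ "(ginv G (fst f), ginv K (snd f))"]) (auto simp: prod_simps)
  ultimately show ?thesis by (rule groupoidI)
qed

lemma gfunctor_pair:
  "gfunctor H G1 P1o P1m \<Longrightarrow> gfunctor H G2 P2o P2m \<Longrightarrow>
   gfunctor H (prod_gpd G1 G2) (\<lambda>X. (P1o X, P2o X)) (\<lambda>h. (P1m h, P2m h))"
  unfolding gfunctor_def by (simp add: prod_gpd_def)

lemma component_reps_unique:
  assumes G: "groupoid G" and R: "component_reps G R" and Y: "Y \<in> R" "Y' \<in> R" and YY': "Hom G Y Y' \<noteq> {}"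
  shows "Y = Y'"
proof -
  have "Y \<in> Obj G" using R Y unfolding component_reps_def by blast
  then have "\<exists>!Z. Z \<in> R \<and> Hom G Y Z \<noteq> {}" and "Hom G Y Y \<noteq> {}"
    using R groupoid_idm_Hom[OF G] unfolding component_reps_def by blast+
  then show ?thesis using Y YY' by blast
qed

lemma component_reps_ex: "component_reps G R \<Longrightarrow> X \<in> Obj G \<Longrightarrow> \<exists>Y\<in>R. Hom G X Y \<noteq> {}"
  unfolding component_reps_def by blast

lemma component_reps_bij:
  assumes G: "groupoid G" and R: "component_reps G R" and R': "component_reps G R'"
  obtains \<phi> where "bij_betw \<phi> R R'" "\<And>Y. Y \<in> R \<Longrightarrow> Hom G Y (\<phi> Y) \<noteq> {}"
proof -
  define \<phi> where "\<phi> Y = (THE Y'. Y' \<in> R' \<and> Hom G Y Y' \<noteq> {})" for Y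
  have RO: "R \<subseteq> Obj G" "R' \<subseteq> Obj G" using R R' unfolding component_reps_def by auto
  have \<phi>: "\<phi> Y \<in> R' \<and> Hom G Y (\<phi> Y) \<noteq> {}" if "Y \<in> R" for Y
  proof -
    have "\<exists>!Y'. Y' \<in> R' \<and> Hom G Y Y' \<noteq> {}" using R' RO that unfolding component_reps_def by blast
    then show ?thesis unfolding \<phi>_def by (rule theI')
  qed
  note sym = groupoid_Hom_nonempty_sym[OF G] and trans = groupoid_Hom_nonempty_trans[OF G]
  have "inj_on \<phi> R"
  proof (rule inj_onI)
    fix Y1 Y2 assume Y: "Y1 \<in> R" "Y2 \<in> R" "\<phi> Y1 = \<phi> Y2"
    then have "Hom G Y2 Y1 \<noteq> {}" using \<phi> sym trans by metis
    then show "Y1 = Y2" using component_reps_unique[OF G R Y(2) Y(1)] by simp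
  qed
  moreover have "R' \<subseteq> \<phi> ` R"
  proof
    fix Y' assume Y': "Y' \<in> R'"
    obtain Y where Y: "Y \<in> R" "Hom G Y' Y \<noteq> {}" using component_reps_ex[OF R] RO Y' by blast
    then have "Hom G (\<phi> Y) Y' \<noteq> {}" using \<phi> sym trans by metis
    then have "\<phi> Y = Y'" using component_reps_unique[OF G R' _ Y'] \<phi>[OF Y(1)] by blast
    then show "Y' \<in> \<phi> ` R" using Y(1) by blast
  qed
  ultimately have "bij_betw \<phi> R R'" using \<phi> unfolding bij_betw_def by blast
  then show ?thesis using that \<phi> by blast
qed

lemma sum_component_reps_eq:
  assumes G: "groupoid G" and R: "component_reps G R" and R': "component_reps G R'"
    and h: "\<And>Y Y'. Y \<in> Obj G \<Longrightarrow> Y' \<in> Obj G \<Longrightarrow> Hom G Y Y' \<noteq> {} \<Longrightarrow> h Y = h Y'"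
  shows "sum h R = sum h R'"
proof -
  obtain \<phi> where \<phi>: "bij_betw \<phi> R R'" "\<And>Y. Y \<in> R \<Longrightarrow> Hom G Y (\<phi> Y) \<noteq> {}"
    using component_reps_bij[OF G R R'] by blast
  have "sum h R' = (\<Sum>Y\<in>R. h (\<phi> Y))" using sum.reindex_bij_betw[OF \<phi>(1), of h] by simp
  also have "\<dots> = sum h R"
    using h \<phi>(2) groupoid_Hom_Obj[OF G] by (metis (no_types, lifting) ex_in_conv sum.cong)
  finally show ?thesis by simp
qed

section \<open>Fibres of a functor\<close>

locale functor_fibre =
  fixes E :: "('o,'m) gpd" and K :: "('p,'n) gpd" and Po :: "'o \<Rightarrow> 'p" and Pm :: "'m \<Rightarrow> 'n" and b :: 'p
  assumes E: "groupoid E" and K: "groupoid K" and P: "gfunctor E K Po Pm" and b: "b \<in> Obj K"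
begin

abbreviation F where "F \<equiv> Fib E K Po Pm b"

lemma Fib_Obj_iff: "X \<in> Obj F \<longleftrightarrow> X \<in> Obj E \<and> Po X = b"
  by (simp add: Fib_def)

lemma Fib_Hom_iff: "f \<in> Hom F X Y \<longleftrightarrow> f \<in> Hom E X Y \<and> Po X = b \<and> Po Y = b \<and> Pm f = idm K b"
  by (simp add: Fib_def)

lemma Fib_cmp: "cmp F = cmp E" and Fib_idm: "idm F = idm E"
  by (simp_all add: Fib_def)

lemma Fib_groupoid: "groupoid F"
proof (rule groupoidI)
  show "\<exists>g\<in>Hom F Y X. cmp F g f = idm F X \<and> cmp F f g = idm F Y" if "f \<in> Hom F X Y" for f X Y
  proof -
    have f: "f \<in> Hom E X Y" "Po X = b" "Po Y = b" "Pm f = idm K b" using that by (simp_all add: Fib_Hom_iff)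
    then have "Pm (ginv E f) = idm K b" using gfunctor_ginv[OF E K P f(1)] ginv_idm[OF K b] by simp
    then have "ginv E f \<in> Hom F Y X" using ginv(1)[OF E f(1)] f by (simp add: Fib_Hom_iff)
    then show ?thesis using ginv[OF E f(1)] by (auto simp: Fib_cmp Fib_idm)
  qed
  show "cmp F g f \<in> Hom F X Z" if "f \<in> Hom F X Y" "g \<in> Hom F Y Z" for f g X Y Z
  proof -
    have "f \<in> Hom E X Y" "g \<in> Hom E Y Z" "Po X = b" "Po Z = b" "Pm f = idm K b" "Pm g = idm K b"
      using that by (simp_all add: Fib_Hom_iff)
    then show ?thesis using groupoid_cmp_Hom[OF E] gfunctor_cmp[OF P] groupoid_idm_left[OF K groupoid_idm_Hom[OF K b]]
      by (simp add: Fib_Hom_iff Fib_cmp)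
  qed
qed (auto simp: Fib_Obj_iff Fib_Hom_iff Fib_cmp Fib_idm groupoid_idm_left[OF E] groupoid_idm_right[OF E]
    gfunctor_idm[OF P]
    dest: groupoid_Hom_Obj[OF E] groupoid_Hom_unique[OF E]
    intro: groupoid_idm_Hom[OF E] groupoid_cmp_assoc[OF E])

lemma conj_vertical:
  assumes k1: "k1 \<in> Hom E X1 Y1" and k2: "k2 \<in> Hom E X2 Y2" and q: "q \<in> Hom E X1 X2"
    and Pq: "Pm q = idm K (Po X1)" and Pk: "Pm k1 = Pm k2"
  shows "cmp E k2 (cmp E q (ginv E k1)) \<in> Hom E Y1 Y2"
    and "Pm (cmp E k2 (cmp E q (ginv E k1))) = idm K (Po Y1)"
proof -
  have i1: "ginv E k1 \<in> Hom E Y1 X1" using ginv(1)[OF E k1] .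
  have u: "cmp E q (ginv E k1) \<in> Hom E Y1 X2" using groupoid_cmp_Hom[OF E i1 q] .
  show "cmp E k2 (cmp E q (ginv E k1)) \<in> Hom E Y1 Y2" using groupoid_cmp_Hom[OF E u k2] .
  have Pk1: "Pm k1 \<in> Hom K (Po X1) (Po Y1)" using gfunctor_Hom[OF P k1] .
  have "Pm (cmp E k2 (cmp E q (ginv E k1))) = cmp K (Pm k1) (cmp K (idm K (Po X1)) (ginv K (Pm k1)))"
    using gfunctor_cmp[OF P u k2] gfunctor_cmp[OF P i1 q] gfunctor_ginv[OF E K P k1] Pq Pk by simp
  also have "\<dots> = idm K (Po Y1)"
    using groupoid_idm_left[OF K ginv(1)[OF K Pk1]] ginv(3)[OF K Pk1] by simp
  finally show "Pm (cmp E k2 (cmp E q (ginv E k1))) = idm K (Po Y1)" .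
qed

lemma Fib_Hom_conj:
  assumes "k1 \<in> Hom E X1 Y1" "k2 \<in> Hom E X2 Y2" "q \<in> Hom E X1 X2"
    and "Pm q = idm K (Po X1)" "Pm k1 = Pm k2" "Y1 \<in> Obj F" "Y2 \<in> Obj F"
  shows "cmp E k2 (cmp E q (ginv E k1)) \<in> Hom F Y1 Y2"
  using conj_vertical[OF assms(1-5)] assms(6,7) by (simp add: Fib_Obj_iff Fib_Hom_iff)

lemma card_Aut_Fib_eq:
  assumes k: "k \<in> Hom E Y' Y" and Y': "Y' \<in> Obj F" and Y: "Y \<in> Obj F"
  shows "card (Aut F Y') = card (Aut F Y)"
proof -
  let ?k' = "ginv E k"
  have k': "?k' \<in> Hom E Y Y'" using ginv(1)[OF E k] .
  have Aut: "f \<in> Hom E Z Z \<and> Pm f = idm K (Po Z)" if "f \<in> Aut F Z" for f Z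
    using that by (simp add: Aut_def Fib_Hom_iff)
  have "bij_betw (\<lambda>f. cmp E k (cmp E f ?k')) (Aut F Y') (Aut F Y)"
  proof (rule bij_betw_byWitness[where f' = "\<lambda>f. cmp E ?k' (cmp E f k)"])
    show "\<forall>f\<in>Aut F Y'. cmp E ?k' (cmp E (cmp E k (cmp E f ?k')) k) = f"
      using conj_ginv_cancel[OF E k] Aut by blast
    show "\<forall>f\<in>Aut F Y. cmp E k (cmp E (cmp E ?k' (cmp E f k)) ?k') = f"
      using conj_ginv_cancel[OF E k'] ginv_ginv[OF E k] Aut by metis
    show "(\<lambda>f. cmp E k (cmp E f ?k')) ` Aut F Y' \<subseteq> Aut F Y"
      using Fib_Hom_conj[OF k k _ _ refl Y Y] Aut unfolding Aut_def by blast
    show "(\<lambda>f. cmp E ?k' (cmp E f k)) ` Aut F Y \<subseteq> Aut F Y'"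
      using Fib_Hom_conj[OF k' k' _ _ refl Y' Y'] Aut ginv_ginv[OF E k] unfolding Aut_def by auto
  qed
  then show ?thesis by (rule bij_betw_same_card)
qed

lemma finite_component_reps:
  assumes S: "finite S" "\<forall>X\<in>Obj E. \<exists>Z\<in>S. Hom E X Z \<noteq> {}"
    and fin: "\<And>Z. finite (Hom K b Z)"
    and R: "component_reps F R"
  shows "finite R"
proof -
  have RF: "R \<subseteq> Obj F" using R unfolding component_reps_def by blast
  have "\<forall>Y\<in>Obj E. \<exists>Z e. Z \<in> S \<and> e \<in> Hom E Y Z" using S(2) by blast
  then obtain Z e where Ze: "\<And>Y. Y \<in> Obj E \<Longrightarrow> Z Y \<in> S \<and> e Y \<in> Hom E Y (Z Y)" by metis
  \<comment> \<open>Two representatives sent into the same \<open>Z\<close> along morphisms with equal images are connected.\<close>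
  have "inj_on (\<lambda>Y. (Z Y, Pm (e Y))) R"
  proof (rule inj_onI)
    fix Y1 Y2 assume Y: "Y1 \<in> R" "Y2 \<in> R" and eq: "(Z Y1, Pm (e Y1)) = (Z Y2, Pm (e Y2))"
    then have YF: "Y1 \<in> Obj F" "Y2 \<in> Obj F" using RF by blast+
    then have e1: "e Y1 \<in> Hom E Y1 (Z Y1)" and e2: "e Y2 \<in> Hom E Y2 (Z Y1)"
      using Ze[of Y1] Ze[of Y2] eq by (simp_all add: Fib_Obj_iff)
    have ZE: "Z Y1 \<in> Obj E" using groupoid_Hom_Obj[OF E e1] by simp
    have "Pm (ginv E (e Y1)) = Pm (ginv E (e Y2))"
      using gfunctor_ginv[OF E K P e1] gfunctor_ginv[OF E K P e2] eq by simp
    then have "Hom F Y1 Y2 \<noteq> {}"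
      using Fib_Hom_conj[OF ginv(1)[OF E e1] ginv(1)[OF E e2] groupoid_idm_Hom[OF E ZE]]
        gfunctor_idm[OF P ZE] YF by blast
    then show "Y1 = Y2" using component_reps_unique[OF Fib_groupoid R Y] by blast
  qed
  moreover have "(Z Y, Pm (e Y)) \<in> Sigma S (\<lambda>Z. Hom K b (Po Z))" if "Y \<in> R" for Y
  proof -
    have "Y \<in> Obj E" "Po Y = b" using RF that by (auto simp: Fib_Obj_iff)
    then show ?thesis using Ze[of Y] gfunctor_Hom[OF P] by fastforce
  qed
  then have "finite ((\<lambda>Y. (Z Y, Pm (e Y))) ` R)"
    using finite_SigmaI[OF S(1) fin] by (blast intro: finite_subset)
  ultimately show ?thesis using finite_imageD by blast
qed

lemma Fib_lift:
  assumes fib: "fibration E K Po Pm" and X: "X \<in> Obj F" and c: "c \<in> Hom K b b"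
  obtains X' k where "X' \<in> Obj F" "k \<in> Hom E X' X" "Pm k = c"
proof -
  have "X \<in> Obj E" "c \<in> Hom K b (Po X)" using X c by (simp_all add: Fib_Obj_iff)
  then obtain X' k where k: "k \<in> Hom E X' X" "Pm k = c" using fib unfolding fibration_def by blast
  have "Po X' = b" using gfunctor_Hom[OF P k(1)] groupoid_Hom_unique[OF K _ c] k(2) by blast
  then have "X' \<in> Obj F" using groupoid_Hom_Obj[OF E k(1)] by (simp add: Fib_Obj_iff)
  then show ?thesis using that k by blast
qed

lemma component_reps_lift:
  assumes fib: "fibration E K Po Pm" and a: "a \<in> Hom K b b" and R: "component_reps F R"
  obtains L where "component_reps F (L ` R)" "inj_on L R" "\<And>Y. Y \<in> R \<Longrightarrow> \<exists>k\<in>Hom E (L Y) Y. Pm k = a"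
proof -
  have RF: "R \<subseteq> Obj F" using R unfolding component_reps_def by blast
  have "\<exists>Y' k. Y' \<in> Obj F \<and> k \<in> Hom E Y' Y \<and> Pm k = a" if "Y \<in> Obj F" for Y
    using Fib_lift[OF fib that a] by blast
  then obtain L kk where L: "\<And>Y. Y \<in> Obj F \<Longrightarrow> L Y \<in> Obj F \<and> kk Y \<in> Hom E (L Y) Y \<and> Pm (kk Y) = a"
    by metis
  have lifts_connected: "Y1 = Y2" if Y: "Y1 \<in> R" "Y2 \<in> R" and conn: "Hom F (L Y1) (L Y2) \<noteq> {}" for Y1 Y2
  proof -
    obtain q where "q \<in> Hom F (L Y1) (L Y2)" using conn by blast
    then have q: "q \<in> Hom E (L Y1) (L Y2)" "Pm q = idm K (Po (L Y1))" by (simp_all add: Fib_Hom_iff)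
    have "Y1 \<in> Obj F" "Y2 \<in> Obj F" using Y RF by blast+
    then have "cmp E (kk Y2) (cmp E q (ginv E (kk Y1))) \<in> Hom F Y1 Y2"
      using Fib_Hom_conj[OF _ _ q] L by simp
    then show ?thesis using component_reps_unique[OF Fib_groupoid R Y] by blast
  qed
  have "component_reps F (L ` R)"
    unfolding component_reps_def
  proof (intro conjI ballI)
    show "L ` R \<subseteq> Obj F" using L RF by blast
    fix X assume X: "X \<in> Obj F"
    obtain X' p where p: "X' \<in> Obj F" "p \<in> Hom E X' X" "Pm p = ginv K a"
      using Fib_lift[OF fib X ginv(1)[OF K a]] .
    obtain Y where Y: "Y \<in> R" "Hom F X' Y \<noteq> {}" using component_reps_ex[OF R p(1)] by blast
    then obtain n where "n \<in> Hom F X' Y" by blast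
    then have n: "n \<in> Hom E X' Y" "Pm n = idm K (Po X')" by (simp_all add: Fib_Hom_iff)
    have LY: "L Y \<in> Obj F" "kk Y \<in> Hom E (L Y) Y" "Pm (kk Y) = a" using L Y(1) RF by blast+
    have "Pm p = Pm (ginv E (kk Y))" using gfunctor_ginv[OF E K P LY(2)] LY(3) p(3) by simp
    then have XLY: "Hom F X (L Y) \<noteq> {}"
      using Fib_Hom_conj[OF p(2) ginv(1)[OF E LY(2)] n(1,2) _ X LY(1)] by blast
    show "\<exists>!Z. Z \<in> L ` R \<and> Hom F X Z \<noteq> {}"
    proof (rule ex1I[of _ "L Y"])
      show "L Y \<in> L ` R \<and> Hom F X (L Y) \<noteq> {}" using Y(1) XLY by blast
      fix Z assume "Z \<in> L ` R \<and> Hom F X Z \<noteq> {}"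
      then obtain Y' where Y': "Y' \<in> R" "Z = L Y'" "Hom F X (L Y') \<noteq> {}" by blast
      then have "Hom F (L Y) (L Y') \<noteq> {}"
        using XLY groupoid_Hom_nonempty_sym[OF Fib_groupoid] groupoid_Hom_nonempty_trans[OF Fib_groupoid]
        by blast
      then show "Z = L Y" using lifts_connected[OF Y(1) Y'(1)] Y'(2) by simp
    qed
  qed
  moreover have "inj_on L R"
  proof (rule inj_onI)
    fix Y1 Y2 assume Y: "Y1 \<in> R" "Y2 \<in> R" and "L Y1 = L Y2"
    then have "idm F (L Y1) \<in> Hom F (L Y1) (L Y2)" using groupoid_idm_Hom[OF Fib_groupoid] L RF by auto
    then show "Y1 = Y2" using lifts_connected[OF Y] by blast
  qed
  moreover have "\<exists>k\<in>Hom E (L Y) Y. Pm k = a" if "Y \<in> R" for Y using L RF that by blast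
  ultimately show ?thesis by (rule that)
qed

end

section \<open>The linear map of a span\<close>

lemma lin_on_sum:
  assumes lin: "lin_on s s' U W f" and U0: "0 \<in> U" and Uadd: "\<And>x y. x \<in> U \<Longrightarrow> y \<in> U \<Longrightarrow> x + y \<in> U"
    and v: "\<And>i. i \<in> I \<Longrightarrow> v i \<in> U"
  shows "f (sum v I) = (\<Sum>i\<in>I. f (v i))"
proof -
  have "f (0 + 0) = f 0 + f 0" using lin U0 unfolding lin_on_def by blast
  then have f0: "f 0 = 0" by simp
  show ?thesis
  proof (cases "finite I")
    case True
    then have "sum v I \<in> U \<and> f (sum v I) = (\<Sum>i\<in>I. f (v i))" using v
    proof (induction I rule: finite_induct)
      case (insert i I)
      then have "f (v i + sum v I) = f (v i) + f (sum v I)" using lin unfolding lin_on_def by simp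
      then show ?case using insert Uadd by simp
    qed (simp add: U0 f0)
    then show ?thesis by simp
  qed (simp add: f0)
qed

lemma vect_rep_module: "vect_rep G s V act \<Longrightarrow> module s"
  unfolding vect_rep_def by blast

lemma vect_rep_subspace: "vect_rep G s V act \<Longrightarrow> A \<in> Obj G \<Longrightarrow> module.subspace s (V A)"
  unfolding vect_rep_def by blast

lemma vect_rep_lin_on: "vect_rep G s V act \<Longrightarrow> f \<in> Hom G A B \<Longrightarrow> lin_on s s (V A) (V B) (act f)"
  unfolding vect_rep_def by blast

lemma vect_rep_idm: "vect_rep G s V act \<Longrightarrow> A \<in> Obj G \<Longrightarrow> x \<in> V A \<Longrightarrow> act (idm G A) x = x"
  unfolding vect_rep_def by blast

locale span_rep =
  fixes G1 :: "('o1,'m1) gpd" and G2 :: "('o2,'m2) gpd" and H :: "('h,'hm) gpd"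
    and P1o :: "'h \<Rightarrow> 'o1" and P1m :: "'hm \<Rightarrow> 'm1"
    and P2o :: "'h \<Rightarrow> 'o2" and P2m :: "'hm \<Rightarrow> 'm2"
    and s1 :: "complex \<Rightarrow> 'v::ab_group_add \<Rightarrow> 'v" and V1 :: "'o1 \<Rightarrow> 'v set" and act1 :: "'m1 \<Rightarrow> 'v \<Rightarrow> 'v"
    and s2 :: "complex \<Rightarrow> 'w::ab_group_add \<Rightarrow> 'w" and V2 :: "'o2 \<Rightarrow> 'w set" and act2 :: "'m2 \<Rightarrow> 'w \<Rightarrow> 'w"
    and \<sigma> :: "'h \<Rightarrow> 'v \<Rightarrow> 'w"
    and A :: 'o1 and B :: 'o2
  assumes G1: "groupoid G1" and G2: "groupoid G2" and H: "groupoid H"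
    and P1: "gfunctor H G1 P1o P1m" and P2: "gfunctor H G2 P2o P2m"
    and fibrant: "fibrant_span G1 H G2 P1o P1m P2o P2m"
    and \<rho>1: "vect_rep G1 s1 V1 act1" and \<rho>2: "vect_rep G2 s2 V2 act2"
    and \<sigma>: "vect_nat_trans H s1 s2 (V1 \<circ> P1o) (act1 \<circ> P1m) (V2 \<circ> P2o) (act2 \<circ> P2m) \<sigma>"
    and A: "A \<in> Obj G1" and B: "B \<in> Obj G2"
begin

sublocale fib: functor_fibre H "prod_gpd G1 G2" "\<lambda>X. (P1o X, P2o X)" "\<lambda>h. (P1m h, P2m h)" "(A, B)"
  using H prod_groupoid[OF G1 G2] gfunctor_pair[OF P1 P2] A B
  by unfold_locales (simp_all add: prod_gpd_Obj)

abbreviation SF where "SF \<equiv> span_fib G1 H G2 P1o P1m P2o P2m A B"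

lemma span_fib_eq: "SF = fib.F"
  by (simp add: span_fib_def)

lemma span_fib_Obj_iff: "Y \<in> Obj SF \<longleftrightarrow> Y \<in> Obj H \<and> P1o Y = A \<and> P2o Y = B"
  by (simp add: span_fib_eq fib.Fib_Obj_iff)

lemma span_fib_Hom_iff:
  "k \<in> Hom SF Y Y' \<longleftrightarrow> k \<in> Hom H Y Y' \<and> P1o Y = A \<and> P2o Y = B \<and> P1o Y' = A \<and> P2o Y' = B \<and>
     P1m k = idm G1 A \<and> P2m k = idm G2 B"
  by (auto simp: span_fib_eq fib.Fib_Hom_iff prod_gpd_idm)

lemma span_fib_groupoid: "groupoid SF"
  by (simp add: span_fib_eq fib.Fib_groupoid)

lemma card_Aut_span_fib_eq:
  "k \<in> Hom H Y' Y \<Longrightarrow> Y' \<in> Obj SF \<Longrightarrow> Y \<in> Obj SF \<Longrightarrow> card (Aut SF Y') = card (Aut SF Y)"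
  unfolding span_fib_eq by (rule fib.card_Aut_Fib_eq)

lemma \<sigma>_in_V2: "Y \<in> Obj SF \<Longrightarrow> x \<in> V1 A \<Longrightarrow> \<sigma> Y x \<in> V2 B"
  using \<sigma> unfolding vect_nat_trans_def lin_on_def by (auto simp: span_fib_Obj_iff)

lemma \<sigma>_transport:
  assumes k: "k \<in> Hom H Y' Y" and Y': "Y' \<in> Obj SF" and x: "x \<in> V1 A" and P1k: "P1m k = idm G1 A"
  shows "\<sigma> Y x = act2 (P2m k) (\<sigma> Y' x)"
proof -
  have "\<sigma> Y (act1 (P1m k) x) = act2 (P2m k) (\<sigma> Y' x)"
    using \<sigma> k x Y' unfolding vect_nat_trans_def by (auto simp: span_fib_Obj_iff)
  then show ?thesis using vect_rep_idm[OF \<rho>1 A x] P1k by simp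
qed

definition fibre_sum :: "'h set \<Rightarrow> 'v \<Rightarrow> 'w" where
  "fibre_sum R x = (\<Sum>Y\<in>R. s2 (1 / of_nat (card (Aut SF Y))) (\<sigma> Y x))"

lemma S_map_eq: "S_map G1 H G2 P1o P1m P2o P2m s2 \<sigma> A B R x = s2 (1 / of_nat (card (Aut G2 B))) (fibre_sum R x)"
  by (simp add: S_map_def fibre_sum_def)

lemma fibre_sum_in_V2:
  assumes R: "component_reps SF R" and x: "x \<in> V1 A"
  shows "fibre_sum R x \<in> V2 B"
  unfolding fibre_sum_def
proof (rule module.subspace_sum[OF vect_rep_module[OF \<rho>2] vect_rep_subspace[OF \<rho>2 B]])
  fix Y assume "Y \<in> R"
  then have "\<sigma> Y x \<in> V2 B" using R x \<sigma>_in_V2 unfolding component_reps_def by blast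
  then show "s2 (1 / of_nat (card (Aut SF Y))) (\<sigma> Y x) \<in> V2 B"
    by (rule module.subspace_scale[OF vect_rep_module[OF \<rho>2] vect_rep_subspace[OF \<rho>2 B]])
qed

lemma fibre_sum_reps_independent:
  assumes R: "component_reps SF R" and R': "component_reps SF R'" and x: "x \<in> V1 A"
  shows "fibre_sum R x = fibre_sum R' x"
  unfolding fibre_sum_def
proof (rule sum_component_reps_eq[OF span_fib_groupoid R R'])
  fix Y Y' assume Y: "Y \<in> Obj SF" and Y': "Y' \<in> Obj SF" and "Hom SF Y Y' \<noteq> {}"
  then obtain k where "k \<in> Hom SF Y Y'" by blast
  then have k: "k \<in> Hom H Y Y'" "P1m k = idm G1 A" "P2m k = idm G2 B" by (simp_all add: span_fib_Hom_iff)
  have "\<sigma> Y' x = \<sigma> Y x"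
    using \<sigma>_transport[OF k(1) Y x k(2)] k(3) vect_rep_idm[OF \<rho>2 B \<sigma>_in_V2[OF Y x]] by simp
  then show "s2 (1 / of_nat (card (Aut SF Y))) (\<sigma> Y x) = s2 (1 / of_nat (card (Aut SF Y'))) (\<sigma> Y' x)"
    using card_Aut_span_fib_eq[OF k(1) Y Y'] by simp
qed

text \<open>Lift \<open>(1, g)\<close> to every representative: by naturality of \<open>\<sigma>\<close>, \<open>g\<close> carries the summand at the
  source of the lift to the summand at the representative.\<close>
lemma fibre_sum_Aut_invariant:
  assumes R: "component_reps SF R" and x: "x \<in> V1 A" and g: "g \<in> Aut G2 B"
  shows "act2 g (fibre_sum R x) = fibre_sum R x"
proof -
  let ?w = "\<lambda>Y. 1 / of_nat (card (Aut SF Y)) :: complex"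
  have gB: "g \<in> Hom G2 B B" using g unfolding Aut_def .
  have "(idm G1 A, g) \<in> Hom (prod_gpd G1 G2) (A, B) (A, B)"
    using groupoid_idm_Hom[OF G1 A] gB by (simp add: prod_gpd_Hom)
  moreover have "fibration H (prod_gpd G1 G2) (\<lambda>X. (P1o X, P2o X)) (\<lambda>h. (P1m h, P2m h))"
    using fibrant unfolding fibrant_span_def .
  moreover have "component_reps fib.F R" using R by (simp add: span_fib_eq)
  ultimately obtain L where "component_reps fib.F (L ` R)" and L: "inj_on L R"
    "\<And>Y. Y \<in> R \<Longrightarrow> \<exists>k\<in>Hom H (L Y) Y. (P1m k, P2m k) = (idm G1 A, g)"
    using fib.component_reps_lift by blast
  then have LR: "component_reps SF (L ` R)" by (simp add: span_fib_eq)
  have RF: "R \<subseteq> Obj SF" "L ` R \<subseteq> Obj SF" using R LR unfolding component_reps_def by blast+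
  have lin: "lin_on s2 s2 (V2 B) (V2 B) (act2 g)" using vect_rep_lin_on[OF \<rho>2 gB] .
  note V2B = vect_rep_module[OF \<rho>2] vect_rep_subspace[OF \<rho>2 B]
  have "act2 g (fibre_sum R x) = act2 g (fibre_sum (L ` R) x)"
    using fibre_sum_reps_independent[OF R LR x] by simp
  also have "\<dots> = (\<Sum>Y\<in>L ` R. act2 g (s2 (?w Y) (\<sigma> Y x)))"
    unfolding fibre_sum_def
  proof (rule lin_on_sum[OF lin module.subspace_0[OF V2B] module.subspace_add[OF V2B]])
    fix Y assume "Y \<in> L ` R"
    then have "\<sigma> Y x \<in> V2 B" using \<sigma>_in_V2 x RF(2) by blast
    then show "s2 (?w Y) (\<sigma> Y x) \<in> V2 B" by (rule module.subspace_scale[OF V2B])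
  qed
  also have "\<dots> = (\<Sum>Y\<in>R. act2 g (s2 (?w (L Y)) (\<sigma> (L Y) x)))"
    using sum.reindex[OF L(1)] by simp
  also have "\<dots> = fibre_sum R x"
    unfolding fibre_sum_def
  proof (rule sum.cong[OF refl])
    fix Y assume Y: "Y \<in> R"
    obtain k where k: "k \<in> Hom H (L Y) Y" "P1m k = idm G1 A" "P2m k = g" using L(2)[OF Y] by auto
    have LY: "L Y \<in> Obj SF" and YF: "Y \<in> Obj SF" using RF Y by blast+
    have "act2 g (s2 (?w (L Y)) (\<sigma> (L Y) x)) = s2 (?w (L Y)) (act2 g (\<sigma> (L Y) x))"
      using lin \<sigma>_in_V2[OF LY x] unfolding lin_on_def by blast
    also have "\<dots> = s2 (?w Y) (\<sigma> Y x)"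
      using \<sigma>_transport[OF k(1) LY x k(2)] k(3) card_Aut_span_fib_eq[OF k(1) LY YF] by simp
    finally show "act2 g (s2 (?w (L Y)) (\<sigma> (L Y) x)) = s2 (?w Y) (\<sigma> Y x)" .
  qed
  finally show ?thesis .
qed

lemma S_map_reps_independent:
  assumes "component_reps SF R" "component_reps SF R'" "x \<in> V1 A"
  shows "S_map G1 H G2 P1o P1m P2o P2m s2 \<sigma> A B R x = S_map G1 H G2 P1o P1m P2o P2m s2 \<sigma> A B R' x"
  unfolding S_map_eq fibre_sum_reps_independent[OF assms] ..

lemma S_map_in_V2:
  "component_reps SF R \<Longrightarrow> x \<in> V1 A \<Longrightarrow> S_map G1 H G2 P1o P1m P2o P2m s2 \<sigma> A B R x \<in> V2 B"
  unfolding S_map_eq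
  by (rule module.subspace_scale[OF vect_rep_module[OF \<rho>2] vect_rep_subspace[OF \<rho>2 B] fibre_sum_in_V2])

lemma S_map_Aut_invariant:
  assumes R: "component_reps SF R" and x: "x \<in> V1 A" and g: "g \<in> Aut G2 B"
  shows "act2 g (S_map G1 H G2 P1o P1m P2o P2m s2 \<sigma> A B R x) = S_map G1 H G2 P1o P1m P2o P2m s2 \<sigma> A B R x"
proof -
  have "lin_on s2 s2 (V2 B) (V2 B) (act2 g)" using vect_rep_lin_on[OF \<rho>2] g unfolding Aut_def by blast
  then have "act2 g (s2 c (fibre_sum R x)) = s2 c (act2 g (fibre_sum R x))" for c
    using fibre_sum_in_V2[OF R x] unfolding lin_on_def by blast
  then show ?thesis unfolding S_map_eq fibre_sum_Aut_invariant[OF R x g] .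
qed

lemma finite_component_reps_span_fib:
  assumes "ess_finite G1" "ess_finite G2" "ess_finite H" and R: "component_reps SF R"
  shows "finite R"
proof -
  obtain S where "finite S" "\<forall>X\<in>Obj H. \<exists>Z\<in>S. Hom H X Z \<noteq> {}"
    using ess_finite_finite_component_cover[OF assms(3)] .
  moreover have "finite (Hom (prod_gpd G1 G2) (A, B) Z)" for Z
    using ess_finite_finite_Hom[OF G1 assms(1)] ess_finite_finite_Hom[OF G2 assms(2)]
    by (cases Z) (simp add: prod_gpd_def)
  moreover have "component_reps fib.F R" using R by (simp add: span_fib_eq)
  ultimately show ?thesis by (rule fib.finite_component_reps)
qed

lemma finite_Aut_span_fib:
  assumes "ess_finite H"
  shows "finite (Aut SF Y)"
proof -
  have "Aut SF Y \<subseteq> Hom H Y Y" unfolding Aut_def using span_fib_Hom_iff by blast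
  then show ?thesis using ess_finite_finite_Hom[OF H assms] by (rule finite_subset)
qed

end

theorem lemma2p7:
  fixes G1 :: "('o1,'m1) gpd" and G2 :: "('o2,'m2) gpd" and H :: "('h,'hm) gpd"
    and P1o :: "'h \<Rightarrow> 'o1" and P1m :: "'hm \<Rightarrow> 'm1"
    and P2o :: "'h \<Rightarrow> 'o2" and P2m :: "'hm \<Rightarrow> 'm2"
    and s1 :: "complex \<Rightarrow> 'v::ab_group_add \<Rightarrow> 'v" and V1 :: "'o1 \<Rightarrow> 'v set" and act1 :: "'m1 \<Rightarrow> 'v \<Rightarrow> 'v"
    and s2 :: "complex \<Rightarrow> 'w::ab_group_add \<Rightarrow> 'w" and V2 :: "'o2 \<Rightarrow> 'w set" and act2 :: "'m2 \<Rightarrow> 'w \<Rightarrow> 'w"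
    and \<sigma> :: "'h \<Rightarrow> 'v \<Rightarrow> 'w"
    and A :: 'o1 and B :: 'o2
  assumes "groupoid G1" and "groupoid G2" and "groupoid H"
    and "ess_finite G1" and "ess_finite G2" and "ess_finite H"
    and "gfunctor H G1 P1o P1m" and "gfunctor H G2 P2o P2m"
    and "fibrant_span G1 H G2 P1o P1m P2o P2m"
    and "vect_rep G1 s1 V1 act1" and "vect_rep G2 s2 V2 act2"
    and "vect_nat_trans H s1 s2 (V1 \<circ> P1o) (act1 \<circ> P1m) (V2 \<circ> P2o) (act2 \<circ> P2m) \<sigma>"
    and "A \<in> Obj G1" and "B \<in> Obj G2"
  shows "(\<forall>R. component_reps (span_fib G1 H G2 P1o P1m P2o P2m A B) R \<longrightarrow> finite R) \<and>
         (\<forall>Y\<in>Obj (span_fib G1 H G2 P1o P1m P2o P2m A B).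
            finite (Aut (span_fib G1 H G2 P1o P1m P2o P2m A B) Y)) \<and>
         (\<forall>R R'. component_reps (span_fib G1 H G2 P1o P1m P2o P2m A B) R \<longrightarrow>
            component_reps (span_fib G1 H G2 P1o P1m P2o P2m A B) R' \<longrightarrow>
            (\<forall>x\<in>V1 A. S_map G1 H G2 P1o P1m P2o P2m s2 \<sigma> A B R x
                        = S_map G1 H G2 P1o P1m P2o P2m s2 \<sigma> A B R' x)) \<and>
         (\<forall>R. component_reps (span_fib G1 H G2 P1o P1m P2o P2m A B) R \<longrightarrow>
            (\<forall>x\<in>V1 A. S_map G1 H G2 P1o P1m P2o P2m s2 \<sigma> A B R x \<in> V2 B \<and>
               (\<forall>g\<in>Aut G2 B. act2 g (S_map G1 H G2 P1o P1m P2o P2m s2 \<sigma> A B R x)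
                   = S_map G1 H G2 P1o P1m P2o P2m s2 \<sigma> A B R x)))"
proof -
  interpret span_rep G1 G2 H P1o P1m P2o P2m s1 V1 act1 s2 V2 act2 \<sigma> A B
    by (rule span_rep.intro) (rule assms)+
  show ?thesis
    using finite_component_reps_span_fib[OF assms(4-6)] finite_Aut_span_fib[OF assms(6)]
      S_map_reps_independent S_map_in_V2 S_map_Aut_invariant by blast
qed

end
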